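(* Let $D$ be an oriented graph and let $P=(u,w_1,\ldots,w_q,v)$ be a directed $(u,v)$-path in $D$ that is not a shortest directed $(u,v)$-path, for some $q\geq 1$, such that $d_D^-(w_i)=d_D^+(w_i)=1$ for every $i\in\{1,\ldots,q\}$. Then any minimum hull set of $D$ in the geodetic convexity contains at least one of the vertices $w_1,\ldots,w_q$.
   Context: An oriented graph is an orientation of a finite simple graph; $d_D^-$ and $d_D^+$ denote in- and out-degree. The geodetic interval function $I_g(u,v)$ is the set of vertices on some shortest directed $(u,v)$-path or some shortest directed $(v,u)$-path. For $S\subseteq V(D)$, $I_g(S)=\bigcup_{u,v\in S}I_g(u,v)$; $C$ is convex if $I_g(C)=C$; the convex hull of $S$ is the smallest convex set containing $S$; a hull set is a set whose convex hull is $V(D)$; a minimum hull set is one of minimum size. *)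

theory Defs
  imports Main
begin

definition oriented_graph :: "'a set \<Rightarrow> ('a \<times> 'a) set \<Rightarrow> bool" where
  "oriented_graph V A \<longleftrightarrow> finite V \<and> A \<subseteq> V \<times> V \<and>
     (\<forall>x y. (x, y) \<in> A \<longrightarrow> x \<noteq> y \<and> (y, x) \<notin> A)"

definition in_degree :: "('a \<times> 'a) set \<Rightarrow> 'a \<Rightarrow> nat" where
  "in_degree A w = card {x. (x, w) \<in> A}"

definition out_degree :: "('a \<times> 'a) set \<Rightarrow> 'a \<Rightarrow> nat" where
  "out_degree A w = card {y. (w, y) \<in> A}"

definition dipath :: "'a set \<Rightarrow> ('a \<times> 'a) set \<Rightarrow> 'a list \<Rightarrow> bool" where
  "dipath V A xs \<longleftrightarrow> xs \<noteq> [] \<and> distinct xs \<and> set xs \<subseteq> V \<and>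
     (\<forall>i. Suc i < length xs \<longrightarrow> (xs ! i, xs ! Suc i) \<in> A)"

definition dipath_from_to :: "'a set \<Rightarrow> ('a \<times> 'a) set \<Rightarrow> 'a \<Rightarrow> 'a \<Rightarrow> 'a list \<Rightarrow> bool" where
  "dipath_from_to V A u v xs \<longleftrightarrow> dipath V A xs \<and> hd xs = u \<and> last xs = v"

definition shortest_dipath :: "'a set \<Rightarrow> ('a \<times> 'a) set \<Rightarrow> 'a \<Rightarrow> 'a \<Rightarrow> 'a list \<Rightarrow> bool" where
  "shortest_dipath V A u v xs \<longleftrightarrow> dipath_from_to V A u v xs \<and>
     (\<forall>ys. dipath_from_to V A u v ys \<longrightarrow> length xs \<le> length ys)"

definition geo_interval :: "'a set \<Rightarrow> ('a \<times> 'a) set \<Rightarrow> 'a \<Rightarrow> 'a \<Rightarrow> 'a set" where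
  "geo_interval V A u v =
     {x. \<exists>xs. (shortest_dipath V A u v xs \<or> shortest_dipath V A v u xs) \<and> x \<in> set xs}"

definition geo_interval_set :: "'a set \<Rightarrow> ('a \<times> 'a) set \<Rightarrow> 'a set \<Rightarrow> 'a set" where
  "geo_interval_set V A S = (\<Union>u\<in>S. \<Union>v\<in>S. geo_interval V A u v)"

definition geo_convex :: "'a set \<Rightarrow> ('a \<times> 'a) set \<Rightarrow> 'a set \<Rightarrow> bool" where
  "geo_convex V A C \<longleftrightarrow> C \<subseteq> V \<and> geo_interval_set V A C = C"

definition geo_hull :: "'a set \<Rightarrow> ('a \<times> 'a) set \<Rightarrow> 'a set \<Rightarrow> 'a set" where
  "geo_hull V A S = \<Inter> {C. geo_convex V A C \<and> S \<subseteq> C}"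

definition hull_set :: "'a set \<Rightarrow> ('a \<times> 'a) set \<Rightarrow> 'a set \<Rightarrow> bool" where
  "hull_set V A S \<longleftrightarrow> S \<subseteq> V \<and> geo_hull V A S = V"

definition min_hull_set :: "'a set \<Rightarrow> ('a \<times> 'a) set \<Rightarrow> 'a set \<Rightarrow> bool" where
  "min_hull_set V A S \<longleftrightarrow> hull_set V A S \<and> (\<forall>T. hull_set V A T \<longrightarrow> card S \<le> card T)"

end

(*
  Every inner vertex w_i of P has a unique in- and a unique out-neighbour, so a directed
  walk that meets some w_i but starts and ends outside {w_1, ..., w_q} must traverse the
  whole of P from u to v. A shortest path cannot contain P, since P could be replaced by a
  shorter (u,v)-path. Hence no geodesic between vertices of V - {w_1, ..., w_q} meets the
  w_i, this set is convex, and every hull set (minimum or not) must meet the w_i.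
*)
theory Submission
  imports Defs
begin

abbreviation walk :: "('a \<times> 'a) set \<Rightarrow> 'a list \<Rightarrow> bool" where
  "walk A xs \<equiv> successively (\<lambda>x y. (x, y) \<in> A) xs"

lemma dipath_iff_walk:
  "dipath V A xs \<longleftrightarrow> xs \<noteq> [] \<and> distinct xs \<and> set xs \<subseteq> V \<and> walk A xs"
  by (auto simp: dipath_def successively_conv_nth)

lemma walk_shortcut_to_dipath:
  assumes "walk A xs" "xs \<noteq> []" "set xs \<subseteq> V"
  shows "\<exists>ys. dipath_from_to V A (hd xs) (last xs) ys \<and> length ys \<le> length xs"
  using assms
proof (induction "length xs" arbitrary: xs rule: less_induct)
  case less
  show ?case
  proof (cases "distinct xs")
    case True
    with less.prems show ?thesis by (auto simp: dipath_from_to_def dipath_iff_walk)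
  next
    case False
    then obtain a z b c where xs: "xs = a @ [z] @ b @ [z] @ c"
      using not_distinct_decomp by blast
    let ?ys = "a @ [z] @ c"
    have "walk A ((a @ [z]) @ b @ z # c)" "walk A ((a @ z # b) @ z # c)"
      using less.prems(1) unfolding xs by simp_all
    then have "walk A (a @ [z])" "walk A (z # c)"
      by (simp_all only: successively_append_iff)
    then have "walk A ?ys"
      by (auto simp: successively_append_iff successively_Cons)
    moreover have "set ?ys \<subseteq> V" and shorter: "length ?ys < length xs"
      using less.prems(3) unfolding xs by auto
    ultimately obtain zs where "dipath_from_to V A (hd ?ys) (last ?ys) zs" "length zs \<le> length ?ys"
      using less.hyps[OF shorter] by auto
    moreover have "hd ?ys = hd xs" "last ?ys = last xs"
      unfolding xs by (cases a; cases c; simp)+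
    ultimately show ?thesis
      using shorter by (metis order.strict_implies_order order.trans)
  qed
qed

lemma successively_unique_pred_suffix:
  assumes "successively R p" "successively R q" "p \<noteq> []" "q \<noteq> []" "last p = last q"
    and "\<And>z a b. z \<in> set (tl q) \<Longrightarrow> R a z \<Longrightarrow> R b z \<Longrightarrow> a = b"
    and "hd p \<notin> set (tl q)"
  shows "\<exists>a. p = a @ q"
  using assms
proof (induction q arbitrary: p rule: rev_induct)
  case Nil
  then show ?case by simp
next
  case (snoc z q)
  obtain p' where p: "p = p' @ [z]"
    using snoc.prems(3,5) by (metis append_butlast_last_id last_snoc)
  show ?case
  proof (cases "q = []")
    case True
    with p show ?thesis by simp
  next
    case False
    have z: "z \<in> set (tl (q @ [z]))" using False by (cases q) auto
    have "p' \<noteq> []" using z snoc.prems(7) p by auto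
    have "R (last p') z" "R (last q) z"
      using snoc.prems(1,2) p \<open>p' \<noteq> []\<close> False
      by (auto simp: successively_append_iff)
    then have "last p' = last q" using snoc.prems(6)[OF z] by blast
    moreover have "successively R p'" "successively R q"
      using snoc.prems(1,2) p by (auto simp: successively_append_iff)
    moreover have "hd p' \<notin> set (tl q)"
      using snoc.prems(7) p \<open>p' \<noteq> []\<close> False by (cases q) auto
    moreover have "\<And>y a b. y \<in> set (tl q) \<Longrightarrow> R a y \<Longrightarrow> R b y \<Longrightarrow> a = b"
      using snoc.prems(6) False by (cases q) auto
    ultimately obtain a where "p' = a @ q"
      using snoc.IH[of p'] \<open>p' \<noteq> []\<close> False by blast
    with p show ?thesis by simp
  qed
qed

lemma successively_unique_succ_prefix:
  assumes "successively R p" "successively R q" "p \<noteq> []" "q \<noteq> []" "hd p = hd q"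
    and "\<And>z a b. z \<in> set (butlast q) \<Longrightarrow> R z a \<Longrightarrow> R z b \<Longrightarrow> a = b"
    and "last p \<notin> set (butlast q)"
  shows "\<exists>b. p = q @ b"
proof -
  have set_tl_rev: "set (tl (rev q)) = set (butlast q)"
    by (metis butlast_rev rev_rev_ident set_rev)
  have "\<exists>b. rev p = b @ rev q"
    by (rule successively_unique_pred_suffix[where R = "\<lambda>x y. R y x"])
      (use assms in \<open>auto simp: hd_rev last_rev set_tl_rev\<close>)
  then show ?thesis
    by (metis rev_append rev_rev_ident)
qed

lemma in_degree_one_unique:
  assumes "in_degree A w = 1" "(a, w) \<in> A" "(b, w) \<in> A"
  shows "a = b"
  using assms unfolding in_degree_def by (metis card_1_singletonE mem_Collect_eq singletonD)

lemma out_degree_one_unique: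
  assumes "out_degree A w = 1" "(w, a) \<in> A" "(w, b) \<in> A"
  shows "a = b"
  using assms unfolding out_degree_def by (metis card_1_singletonE mem_Collect_eq singletonD)

lemma walk_through_thread:
  assumes thread: "walk A (u # ws @ [v])"
    and deg: "\<forall>w\<in>set ws. in_degree A w = 1 \<and> out_degree A w = 1"
    and p: "walk A p" "hd p \<notin> set ws" "last p \<notin> set ws"
    and w: "w \<in> set p" "w \<in> set ws"
  shows "\<exists>a b. p = a @ (u # ws @ [v]) @ b"
proof -
  obtain p1 p2 where p_split: "p = p1 @ w # p2"
    using split_list[OF w(1)] by blast
  obtain ws1 ws2 where ws_split: "ws = ws1 @ w # ws2"
    using split_list[OF w(2)] by blast
  have "walk A ((u # ws1 @ [w]) @ ws2 @ [v])" "walk A ((u # ws1) @ w # ws2 @ [v])"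
    using thread unfolding ws_split by simp_all
  then have walk_in: "walk A (u # ws1 @ [w])" and walk_out: "walk A (w # ws2 @ [v])"
    by (simp_all only: successively_append_iff)
  have "walk A ((p1 @ [w]) @ p2)" "walk A (p1 @ w # p2)"
    using p(1) unfolding p_split by simp_all
  then have "walk A (p1 @ [w])" "walk A (w # p2)"
    by (simp_all only: successively_append_iff)
  have "\<exists>a. p1 @ [w] = a @ (u # ws1 @ [w])"
  proof (rule successively_unique_pred_suffix[OF \<open>walk A (p1 @ [w])\<close> walk_in])
    show "a = b" if "z \<in> set (tl (u # ws1 @ [w]))" "(a, z) \<in> A" "(b, z) \<in> A" for z a b
      using deg in_degree_one_unique[OF _ that(2,3)] that(1) unfolding ws_split by auto
    show "hd (p1 @ [w]) \<notin> set (tl (u # ws1 @ [w]))"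
      using p(2) w(2) unfolding p_split ws_split by (cases p1) auto
  qed simp_all
  then obtain a where a: "p1 = a @ u # ws1" by auto
  have "\<exists>b. w # p2 = (w # ws2 @ [v]) @ b"
  proof (rule successively_unique_succ_prefix[OF \<open>walk A (w # p2)\<close> walk_out])
    show "a = b" if "z \<in> set (butlast (w # ws2 @ [v]))" "(z, a) \<in> A" "(z, b) \<in> A" for z a b
      using deg out_degree_one_unique[OF _ that(2,3)] that(1) unfolding ws_split
      by (auto simp: butlast_append)
    show "last (w # p2) \<notin> set (butlast (w # ws2 @ [v]))"
      using p(3) w(2) unfolding p_split ws_split by (cases p2 rule: rev_cases) auto
  qed simp_all
  then obtain b where b: "p2 = ws2 @ v # b" by auto
  show ?thesis
    unfolding p_split a b ws_split by auto
qed

lemma shortest_dipath_infix: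
  assumes p: "shortest_dipath V A x y (a @ q @ b)" and "q \<noteq> []"
  shows "shortest_dipath V A (hd q) (last q) q"
proof -
  have p_path: "distinct (a @ q @ b)" "set (a @ q @ b) \<subseteq> V" "walk A (a @ q @ b)"
    and p_ends: "hd (a @ q @ b) = x" "last (a @ q @ b) = y"
    using p by (auto simp: shortest_dipath_def dipath_from_to_def dipath_iff_walk)
  have "dipath_from_to V A (hd q) (last q) q"
    using p_path \<open>q \<noteq> []\<close>
    by (auto simp: dipath_from_to_def dipath_iff_walk successively_append_iff)
  moreover have "length q \<le> length ys" if ys: "dipath_from_to V A (hd q) (last q) ys" for ys
  proof -
    have "ys \<noteq> []" "set ys \<subseteq> V" "walk A ys" "hd ys = hd q" "last ys = last q"
      using ys by (auto simp: dipath_from_to_def dipath_iff_walk)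
    have "hd (a @ ys @ b) = hd (a @ q @ b)"
      using \<open>hd ys = hd q\<close> \<open>ys \<noteq> []\<close> \<open>q \<noteq> []\<close> by (cases a) simp_all
    moreover have "last (a @ ys @ b) = last (a @ q @ b)"
      using \<open>last ys = last q\<close> \<open>ys \<noteq> []\<close> \<open>q \<noteq> []\<close> by (cases b rule: rev_cases) simp_all
    moreover have "walk A (a @ ys @ b)"
      using p_path(3) \<open>walk A ys\<close> \<open>hd ys = hd q\<close> \<open>last ys = last q\<close> \<open>ys \<noteq> []\<close> \<open>q \<noteq> []\<close>
      by (simp add: successively_append_iff)
    moreover have "set (a @ ys @ b) \<subseteq> V"
      using p_path(2) \<open>set ys \<subseteq> V\<close> by simp
    ultimately obtain zs where zs: "dipath_from_to V A x y zs" "length zs \<le> length (a @ ys @ b)"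
      using walk_shortcut_to_dipath[of A "a @ ys @ b" V] \<open>ys \<noteq> []\<close> p_ends by auto
    moreover have "length (a @ q @ b) \<le> length zs"
      using p zs(1) unfolding shortest_dipath_def by blast
    ultimately show ?thesis by simp
  qed
  ultimately show ?thesis
    unfolding shortest_dipath_def by blast
qed

lemma shortest_dipath_avoids_thread:
  assumes thread: "dipath_from_to V A u v (u # ws @ [v])"
    and not_shortest: "\<not> shortest_dipath V A u v (u # ws @ [v])"
    and deg: "\<forall>w\<in>set ws. in_degree A w = 1 \<and> out_degree A w = 1"
    and p: "shortest_dipath V A x y p" and "x \<notin> set ws" "y \<notin> set ws"
  shows "set p \<inter> set ws = {}"
proof (rule ccontr)
  assume "set p \<inter> set ws \<noteq> {}"
  then obtain w where w: "w \<in> set p" "w \<in> set ws" by blast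
  have p_walk: "walk A p" and "hd p = x" "last p = y"
    using p by (auto simp: shortest_dipath_def dipath_from_to_def dipath_iff_walk)
  have "walk A (u # ws @ [v])"
    using thread by (simp add: dipath_from_to_def dipath_iff_walk)
  then obtain a b where "p = a @ (u # ws @ [v]) @ b"
    using walk_through_thread[OF _ deg p_walk _ _ w] \<open>x \<notin> set ws\<close> \<open>y \<notin> set ws\<close>
      \<open>hd p = x\<close> \<open>last p = y\<close> by blast
  then have "shortest_dipath V A u v (u # ws @ [v])"
    using shortest_dipath_infix[of V A x y a "u # ws @ [v]" b] p by simp
  with not_shortest show False ..
qed

lemma shortest_dipath_singleton:
  assumes "z \<in> V"
  shows "shortest_dipath V A z z [z]"
  using assms
  by (auto simp: shortest_dipath_def dipath_from_to_def dipath_def Suc_le_eq)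

lemma geo_convexI:
  assumes "C \<subseteq> V" "geo_interval_set V A C \<subseteq> C"
  shows "geo_convex V A C"
proof -
  have "z \<in> geo_interval V A z z" if "z \<in> C" for z
    using shortest_dipath_singleton[of z V A] that assms(1)
    unfolding geo_interval_def by (auto intro!: exI[of _ "[z]"])
  then have "C \<subseteq> geo_interval_set V A C"
    unfolding geo_interval_set_def by blast
  with assms show ?thesis
    unfolding geo_convex_def by blast
qed

lemma geo_convex_Diff_thread:
  assumes thread: "dipath_from_to V A u v (u # ws @ [v])"
    and not_shortest: "\<not> shortest_dipath V A u v (u # ws @ [v])"
    and deg: "\<forall>w\<in>set ws. in_degree A w = 1 \<and> out_degree A w = 1"
  shows "geo_convex V A (V - set ws)"
proof (rule geo_convexI)
  show "geo_interval_set V A (V - set ws) \<subseteq> V - set ws"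
  proof
    fix z assume "z \<in> geo_interval_set V A (V - set ws)"
    then obtain x y p where "x \<in> V - set ws" "y \<in> V - set ws" "z \<in> set p"
      and "shortest_dipath V A x y p \<or> shortest_dipath V A y x p"
      unfolding geo_interval_set_def geo_interval_def by blast
    then have "set p \<inter> set ws = {}" "set p \<subseteq> V"
      using shortest_dipath_avoids_thread[OF thread not_shortest deg]
      by (auto simp: shortest_dipath_def dipath_from_to_def dipath_def)
    with \<open>z \<in> set p\<close> show "z \<in> V - set ws" by blast
  qed
qed auto

lemma hull_set_subset_geo_convex:
  assumes "hull_set V A S" "geo_convex V A C" "S \<subseteq> C"
  shows "V \<subseteq> C"
  using assms unfolding hull_set_def geo_hull_def by blast

theorem proposition4:
  fixes V :: "'a set" and A :: "('a \<times> 'a) set" and u v :: 'a and ws :: "'a list" and S :: "'a set"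
  assumes "oriented_graph V A"
    and "dipath_from_to V A u v (u # ws @ [v])"
    and "\<not> shortest_dipath V A u v (u # ws @ [v])"
    and "length ws \<ge> 1"
    and "\<forall>w\<in>set ws. in_degree A w = 1 \<and> out_degree A w = 1"
    and "min_hull_set V A S"
  shows "\<exists>w\<in>set ws. w \<in> S"
proof (rule ccontr)
  assume "\<not> (\<exists>w\<in>set ws. w \<in> S)"
  moreover have hull: "hull_set V A S"
    using assms(6) unfolding min_hull_set_def by blast
  ultimately have "S \<subseteq> V - set ws"
    unfolding hull_set_def by blast
  then have "V \<subseteq> V - set ws"
    using hull_set_subset_geo_convex[OF hull geo_convex_Diff_thread[OF assms(2,3,5)]] by blast
  moreover obtain w where "w \<in> set ws"
    using assms(4) by (cases ws) auto
  moreover have "set ws \<subseteq> V"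
    using assms(2) by (auto simp: dipath_from_to_def dipath_def)
  ultimately show False by blast
qed

end
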